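(* Let $\mathbf{M}=\langle M,+,\vee,\wedge,0,1,-1\rangle$ be a unital commutative distributive $\ell$-monoid. The following are equivalent: (1) $\mathbf{M}$ is cancellative, i.e. for all $x,y,z\in M$, $x+z=y+z$ implies $x=y$; (2) for all $x,y,z\in\{w\in M\mid 0\le w\le 1\}$, if $x+z=y+z$ then $x=y$; (3) for all $x,y,z\in\Gamma(\mathbf{M})$, if $x\oplus z=y\oplus z$ and $x\odot z=y\odot z$ then $x=y$.
   Context: A \emph{unital commutative distributive $\ell$-monoid} is an algebra $\langle M,+,\vee,\wedge,0,1,-1\rangle$ (arities $2,2,2,0,0,0$) such that: $\langle M,\vee,\wedge\rangle$ is a distributive lattice (with order $\le$); $\langle M,+,0\rangle$ is a commutative monoid; $+$ distributes over $\vee$ and $\wedge$; $-1+1=0$; $-1\le 0\le 1$; and for every $x\in M$ there is $n\in\mathbb{N}\setminus\{0\}$ with $(-1)+\dots+(-1)\le x\le 1+\dots+1$ ($n$ summands each). For such $\mathbf{M}$, $\Gamma(\mathbf{M})$ is the set $\{x\in M\mid 0\le x\le 1\}$ with $\vee,\wedge,0,1$ restricted and $x\oplus y:=(x+y)\wedge 1$, $x\odot y:=(x+y+(-1))\vee 0$. *)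

theory Defs
  imports Main
begin

text \<open>A unital commutative distributive l-monoid, given by a carrier set M and
operations add (+), jn (join), mt (meet), constants z (0), u (1), m (-1).
The lattice order is x \<le> y iff jn x y = y.\<close>

definition lle :: "('a \<Rightarrow> 'a \<Rightarrow> 'a) \<Rightarrow> 'a \<Rightarrow> 'a \<Rightarrow> bool" where
  "lle jn x y \<longleftrightarrow> jn x y = y"

definition nsum :: "('a \<Rightarrow> 'a \<Rightarrow> 'a) \<Rightarrow> 'a \<Rightarrow> 'a \<Rightarrow> nat \<Rightarrow> 'a" where
  "nsum add z a n = (add a ^^ n) z"

definition ucdlm ::
  "'a set \<Rightarrow> ('a \<Rightarrow> 'a \<Rightarrow> 'a) \<Rightarrow> ('a \<Rightarrow> 'a \<Rightarrow> 'a) \<Rightarrow> ('a \<Rightarrow> 'a \<Rightarrow> 'a)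
     \<Rightarrow> 'a \<Rightarrow> 'a \<Rightarrow> 'a \<Rightarrow> bool" where
  "ucdlm M add jn mt z u m \<longleftrightarrow>
     \<comment> \<open>closure\<close>
     (\<forall>x\<in>M. \<forall>y\<in>M. add x y \<in> M \<and> jn x y \<in> M \<and> mt x y \<in> M) \<and> z \<in> M \<and> u \<in> M \<and> m \<in> M \<and>
     \<comment> \<open>distributive lattice\<close>
     (\<forall>x\<in>M. \<forall>y\<in>M. jn x y = jn y x \<and> mt x y = mt y x) \<and>
     (\<forall>x\<in>M. \<forall>y\<in>M. \<forall>w\<in>M. jn (jn x y) w = jn x (jn y w) \<and> mt (mt x y) w = mt x (mt y w)) \<and>
     (\<forall>x\<in>M. \<forall>y\<in>M. jn x (mt x y) = x \<and> mt x (jn x y) = x) \<and>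
     (\<forall>x\<in>M. \<forall>y\<in>M. \<forall>w\<in>M. mt x (jn y w) = jn (mt x y) (mt x w)) \<and>
     \<comment> \<open>commutative monoid\<close>
     (\<forall>x\<in>M. \<forall>y\<in>M. add x y = add y x) \<and>
     (\<forall>x\<in>M. \<forall>y\<in>M. \<forall>w\<in>M. add (add x y) w = add x (add y w)) \<and>
     (\<forall>x\<in>M. add x z = x) \<and>
     \<comment> \<open>+ distributes over join and meet\<close>
     (\<forall>x\<in>M. \<forall>y\<in>M. \<forall>w\<in>M. add x (jn y w) = jn (add x y) (add x w) \<and>
                            add x (mt y w) = mt (add x y) (add x w)) \<and>
     \<comment> \<open>-1 + 1 = 0, -1 \<le> 0 \<le> 1\<close>
     add m u = z \<and> lle jn m z \<and> lle jn z u \<and>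
     \<comment> \<open>strong unit\<close>
     (\<forall>x\<in>M. \<exists>n::nat. n \<noteq> 0 \<and> lle jn (nsum add z m n) x \<and> lle jn x (nsum add z u n))"

definition Gamma :: "'a set \<Rightarrow> ('a \<Rightarrow> 'a \<Rightarrow> 'a) \<Rightarrow> 'a \<Rightarrow> 'a \<Rightarrow> 'a set" where
  "Gamma M jn z u = {x \<in> M. lle jn z x \<and> lle jn x u}"

definition oplusG :: "('a \<Rightarrow> 'a \<Rightarrow> 'a) \<Rightarrow> ('a \<Rightarrow> 'a \<Rightarrow> 'a) \<Rightarrow> 'a \<Rightarrow> 'a \<Rightarrow> 'a \<Rightarrow> 'a" where
  "oplusG add mt u x y = mt (add x y) u"

definition odotG :: "('a \<Rightarrow> 'a \<Rightarrow> 'a) \<Rightarrow> ('a \<Rightarrow> 'a \<Rightarrow> 'a) \<Rightarrow> 'a \<Rightarrow> 'a \<Rightarrow> 'a \<Rightarrow> 'a \<Rightarrow> 'a" where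
  "odotG add jn z m x y = jn (add (add x y) m) z"

end

theory Submission
  imports Defs
begin

text \<open>Every element splits as \<open>w = (w \<and> 1) + ((w - 1) \<or> 0)\<close>, the first summand lying
in \<open>\<Gamma>(M)\<close> when \<open>w \<ge> 0\<close>. Since \<open>x \<oplus> w\<close> and \<open>x \<odot> w\<close> are the two summands of
\<open>x + w\<close>, they determine it, which gives (2) \<Leftrightarrow> (3). For (2) \<Rightarrow> (1), an element of \<open>\<Gamma>(M)\<close>
cancels on \<open>0 \<le> x, y \<le> n\<cdot>1\<close> by induction on \<open>n\<close>, splitting \<open>x\<close> and \<open>y\<close> as above; adding
a multiple of the invertible element 1 extends this to all of \<open>M\<close>. A positive
\<open>w \<le> n\<cdot>1\<close> is a sum of \<open>n\<close> elements of \<open>\<Gamma>(M)\<close>, hence cancellable, and an arbitrary \<open>w\<close>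
becomes positive after adding a multiple of 1.\<close>

locale ucdl_monoid =
  fixes M add jn mt z u m
  assumes ucdlm: "ucdlm M add jn mt z u m"
begin

abbreviation le where "le x y \<equiv> lle jn x y"
abbreviation un where "un n \<equiv> nsum add z u n"
abbreviation mn where "mn n \<equiv> nsum add z m n"

definition cancellable :: "'a set \<Rightarrow> 'a \<Rightarrow> bool" where
  "cancellable S c \<longleftrightarrow> (\<forall>x\<in>S. \<forall>y\<in>S. add x c = add y c \<longrightarrow> x = y)"

lemma add_closed [simp]: "x \<in> M \<Longrightarrow> y \<in> M \<Longrightarrow> add x y \<in> M"
  and jn_closed [simp]: "x \<in> M \<Longrightarrow> y \<in> M \<Longrightarrow> jn x y \<in> M"
  and mt_closed [simp]: "x \<in> M \<Longrightarrow> y \<in> M \<Longrightarrow> mt x y \<in> M"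
  and consts_closed [simp]: "z \<in> M" "u \<in> M" "m \<in> M"
  using ucdlm unfolding ucdlm_def by simp_all

lemma jn_commute: "x \<in> M \<Longrightarrow> y \<in> M \<Longrightarrow> jn x y = jn y x"
  and mt_commute: "x \<in> M \<Longrightarrow> y \<in> M \<Longrightarrow> mt x y = mt y x"
  and jn_assoc: "x \<in> M \<Longrightarrow> y \<in> M \<Longrightarrow> w \<in> M \<Longrightarrow> jn (jn x y) w = jn x (jn y w)"
  and mt_assoc: "x \<in> M \<Longrightarrow> y \<in> M \<Longrightarrow> w \<in> M \<Longrightarrow> mt (mt x y) w = mt x (mt y w)"
  and jn_absorb: "x \<in> M \<Longrightarrow> y \<in> M \<Longrightarrow> jn x (mt x y) = x"
  and mt_absorb: "x \<in> M \<Longrightarrow> y \<in> M \<Longrightarrow> mt x (jn x y) = x"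
  and mt_jn_distrib: "x \<in> M \<Longrightarrow> y \<in> M \<Longrightarrow> w \<in> M \<Longrightarrow> mt x (jn y w) = jn (mt x y) (mt x w)"
  using ucdlm unfolding ucdlm_def by blast+

lemma add_commute: "x \<in> M \<Longrightarrow> y \<in> M \<Longrightarrow> add x y = add y x"
  and add_assoc: "x \<in> M \<Longrightarrow> y \<in> M \<Longrightarrow> w \<in> M \<Longrightarrow> add (add x y) w = add x (add y w)"
  and add_zero_right [simp]: "x \<in> M \<Longrightarrow> add x z = x"
  and add_jn_distrib: "x \<in> M \<Longrightarrow> y \<in> M \<Longrightarrow> w \<in> M \<Longrightarrow> add x (jn y w) = jn (add x y) (add x w)"
  and add_mt_distrib: "x \<in> M \<Longrightarrow> y \<in> M \<Longrightarrow> w \<in> M \<Longrightarrow> add x (mt y w) = mt (add x y) (add x w)"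
  and add_m_u: "add m u = z"
  and zero_le_u: "le z u"
  and strong_unit: "x \<in> M \<Longrightarrow> \<exists>n. n \<noteq> 0 \<and> le (mn n) x \<and> le x (un n)"
  using ucdlm unfolding ucdlm_def by blast+

lemma add_zero_left [simp]: "x \<in> M \<Longrightarrow> add z x = x"
  using add_commute add_zero_right consts_closed by metis

lemma add_left_commute: "x \<in> M \<Longrightarrow> y \<in> M \<Longrightarrow> w \<in> M \<Longrightarrow> add x (add y w) = add y (add x w)"
  by (metis add_assoc add_commute)

lemma add_u_m: "add u m = z"
  using add_m_u add_commute consts_closed by metis

lemma add_jn_distrib_right: "x \<in> M \<Longrightarrow> y \<in> M \<Longrightarrow> w \<in> M \<Longrightarrow> add (jn x y) w = jn (add x w) (add y w)"
  by (metis add_commute add_jn_distrib jn_closed)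

lemma add_mt_distrib_right: "x \<in> M \<Longrightarrow> y \<in> M \<Longrightarrow> w \<in> M \<Longrightarrow> add (mt x y) w = mt (add x w) (add y w)"
  by (metis add_commute add_mt_distrib mt_closed)

lemma jn_idem: "x \<in> M \<Longrightarrow> jn x x = x"
  using jn_absorb[of x "jn x x"] by (simp add: mt_absorb)

lemma le_antisym: "x \<in> M \<Longrightarrow> y \<in> M \<Longrightarrow> le x y \<Longrightarrow> le y x \<Longrightarrow> x = y"
  unfolding lle_def by (metis jn_commute)

lemma le_trans: "x \<in> M \<Longrightarrow> y \<in> M \<Longrightarrow> w \<in> M \<Longrightarrow> le x y \<Longrightarrow> le y w \<Longrightarrow> le x w"
  unfolding lle_def by (metis jn_assoc)

lemma le_iff_mt: "x \<in> M \<Longrightarrow> y \<in> M \<Longrightarrow> le x y \<longleftrightarrow> mt x y = x"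
  unfolding lle_def by (metis jn_absorb mt_absorb jn_commute mt_commute)

lemma jn_upper1: "x \<in> M \<Longrightarrow> y \<in> M \<Longrightarrow> le x (jn x y)"
  and jn_upper2: "x \<in> M \<Longrightarrow> y \<in> M \<Longrightarrow> le y (jn x y)"
  unfolding lle_def by (metis jn_assoc jn_idem jn_commute)+

lemma jn_least: "x \<in> M \<Longrightarrow> y \<in> M \<Longrightarrow> w \<in> M \<Longrightarrow> le x w \<Longrightarrow> le y w \<Longrightarrow> le (jn x y) w"
  unfolding lle_def by (metis jn_assoc)

lemma mt_idem: "x \<in> M \<Longrightarrow> mt x x = x"
  using mt_absorb[of x "mt x x"] by (simp add: jn_absorb)

lemma mt_lower1: "x \<in> M \<Longrightarrow> y \<in> M \<Longrightarrow> le (mt x y) x"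
  using mt_assoc[of x x y] by (simp add: le_iff_mt mt_commute[of "mt x y" x] mt_idem)

lemma mt_lower2: "x \<in> M \<Longrightarrow> y \<in> M \<Longrightarrow> le (mt x y) y"
  using mt_lower1[of y x] by (simp add: mt_commute)

lemma mt_greatest: "x \<in> M \<Longrightarrow> y \<in> M \<Longrightarrow> w \<in> M \<Longrightarrow> le w x \<Longrightarrow> le w y \<Longrightarrow> le w (mt x y)"
  by (metis le_iff_mt mt_closed mt_assoc)

lemma jn_mt_distrib: "x \<in> M \<Longrightarrow> y \<in> M \<Longrightarrow> w \<in> M \<Longrightarrow> jn x (mt y w) = mt (jn x y) (jn x w)"
proof -
  assume M: "x \<in> M" "y \<in> M" "w \<in> M"
  have "mt (jn x y) (jn x w) = jn (mt (jn x y) x) (mt (jn x y) w)"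
    using M by (simp add: mt_jn_distrib)
  also have "mt (jn x y) x = x"
    using M by (metis mt_absorb mt_commute jn_closed)
  also have "mt (jn x y) w = jn (mt w x) (mt w y)"
    using M by (metis mt_jn_distrib mt_commute jn_closed)
  also have "jn x (jn (mt w x) (mt w y)) = jn (jn x (mt w x)) (mt w y)"
    using M by (simp add: jn_assoc)
  also have "jn x (mt w x) = x"
    using M by (metis jn_absorb mt_commute)
  finally show ?thesis
    using M by (simp add: mt_commute)
qed

lemma add_mono: "a \<in> M \<Longrightarrow> b \<in> M \<Longrightarrow> c \<in> M \<Longrightarrow> le a b \<Longrightarrow> le (add c a) (add c b)"
  unfolding lle_def by (metis add_jn_distrib)

lemma add_mt_jn: "a \<in> M \<Longrightarrow> b \<in> M \<Longrightarrow> add (mt a b) (jn a b) = add a b"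
proof -
  assume M: "a \<in> M" "b \<in> M"
  have below: "add (mt a b) (jn a b) = mt (add a b) (jn (add a a) (add b b))"
    using M by (simp add: add_jn_distrib add_mt_distrib_right mt_jn_distrib
        mt_commute[of "add a a" "add a b"] add_commute[of b a])
  have "add (mt a b) (jn a b) = add (jn a b) (mt a b)"
    using M by (simp add: add_commute)
  also have "\<dots> = mt (jn (add a b) (add a a)) (jn (add a b) (add b b))"
    using M by (simp add: add_mt_distrib add_jn_distrib_right jn_commute[of "add a a"]
        add_commute[of b a])
  also have "\<dots> = jn (add a b) (mt (add a a) (add b b))"
    using M by (simp add: jn_mt_distrib)
  finally have above: "add (mt a b) (jn a b) = jn (add a b) (mt (add a a) (add b b))" .
  have "le (add (mt a b) (jn a b)) (add a b)"
    using below M by (simp add: mt_lower1)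
  moreover have "le (add a b) (add (mt a b) (jn a b))"
    using above M by (simp add: jn_upper1)
  ultimately show ?thesis
    using M by (simp add: le_antisym)
qed

lemma nsum_0 [simp]: "nsum add z a 0 = z"
  and nsum_Suc [simp]: "nsum add z a (Suc n) = add a (nsum add z a n)"
  by (simp_all add: nsum_def)

lemma un_closed [simp]: "un n \<in> M"
  and mn_closed [simp]: "mn n \<in> M"
  by (induction n) auto

lemma un_add_mn: "add (un n) (mn n) = z"
proof (induction n)
  case (Suc n)
  have "add (un (Suc n)) (mn (Suc n)) = add (add u m) (add (un n) (mn n))"
    by (simp add: add_assoc add_left_commute)
  then show ?case
    using Suc add_u_m by simp
qed simp

lemma un_Suc_add_m: "add (un (Suc k)) m = un k"
  by (metis nsum_Suc add_assoc add_left_commute add_u_m add_zero_right un_closed consts_closed)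

lemma zero_le_un: "le z (un n)"
proof (induction n)
  case 0
  show ?case
    unfolding lle_def by (simp add: jn_idem)
next
  case (Suc n)
  have "le u (add u (un n))"
    using add_mono[of z "un n" u] Suc by simp
  then show ?case
    using le_trans[of z u "un (Suc n)"] zero_le_u by simp
qed

lemma le_un_0_imp_zero: "x \<in> M \<Longrightarrow> le z x \<Longrightarrow> le x (un 0) \<Longrightarrow> x = z"
  using le_antisym by simp

lemma shift_nonneg: "x \<in> M \<Longrightarrow> le (mn n) x \<Longrightarrow> le z (add x (un n))"
  using add_mono[of "mn n" x "un n"] by (simp add: un_add_mn add_commute[of x])

lemma truncation_decomp: "w \<in> M \<Longrightarrow> add (mt w u) (jn (add w m) z) = w"
proof -
  assume w: "w \<in> M"
  have shifted: "add u (jn (add w m) z) = jn w u"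
    using w by (simp add: add_jn_distrib add_left_commute[of u w m] add_u_m)
  have "add (add (mt w u) (jn (add w m) z)) u = add (mt w u) (add u (jn (add w m) z))"
    using w by (simp add: add_assoc add_commute[of "jn (add w m) z" u])
  also have "\<dots> = add w u"
    using w by (simp add: shifted add_mt_jn)
  finally have "add (add (mt w u) (jn (add w m) z)) u = add w u" .
  then have "add (add (add (mt w u) (jn (add w m) z)) u) m = add (add w u) m"
    by simp
  then show ?thesis
    using w by (simp add: add_assoc add_u_m)
qed

lemma mt_u_in_Gamma: "w \<in> M \<Longrightarrow> le z w \<Longrightarrow> mt w u \<in> Gamma M jn z u"
  unfolding Gamma_def using mt_lower2 mt_greatest zero_le_u by simp

lemma truncation_le_un: "w \<in> M \<Longrightarrow> le w (un (Suc k)) \<Longrightarrow> le (jn (add w m) z) (un k)"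
proof -
  assume w: "w \<in> M" and bound: "le w (un (Suc k))"
  have "le (add m w) (add m (un (Suc k)))"
    using add_mono w bound un_closed consts_closed by blast
  then have "le (add w m) (add (un (Suc k)) m)"
    using w by (simp only: add_commute[of m] un_closed consts_closed)
  then have "le (add w m) (un k)"
    by (simp only: un_Suc_add_m)
  then show ?thesis
    using w jn_least zero_le_un by simp
qed

lemma cancellable_add:
  assumes c: "c \<in> M" and d: "d \<in> M" and "cancellable M c" "cancellable M d"
  shows "cancellable M (add c d)"
  unfolding cancellable_def
proof (intro ballI impI)
  fix x y assume x: "x \<in> M" and y: "y \<in> M" and e: "add x (add c d) = add y (add c d)"
  then have "add (add x c) d = add (add y c) d"
    using c d by (simp add: add_assoc)
  then have "add x c = add y c"
    using \<open>cancellable M d\<close> x y c unfolding cancellable_def by simp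
  then show "x = y"
    using \<open>cancellable M c\<close> x y unfolding cancellable_def by simp
qed

lemma cancellable_add_left_factor:
  assumes c: "c \<in> M" and d: "d \<in> M" and cd: "cancellable M (add c d)"
  shows "cancellable M c"
  unfolding cancellable_def
proof (intro ballI impI)
  fix x y assume x: "x \<in> M" and y: "y \<in> M" and "add x c = add y c"
  then have "add x (add c d) = add y (add c d)"
    using c d by (simp flip: add_assoc)
  then show "x = y"
    using cd x y unfolding cancellable_def by simp
qed

lemma cancellable_un: "cancellable M (un n)"
  using cancellable_add_left_factor[of "un n" "mn n"] un_add_mn
  unfolding cancellable_def by simp

lemma Gamma_cancels_bounded_nonneg:
  assumes H: "\<forall>c\<in>Gamma M jn z u. cancellable (Gamma M jn z u) c"
    and w: "w \<in> Gamma M jn z u"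
  shows "\<lbrakk>x \<in> M; y \<in> M; le z x; le z y; le x (un k); le y (un k); add x w = add y w\<rbrakk> \<Longrightarrow> x = y"
proof (induction k arbitrary: x y)
  case 0
  then show ?case
    using le_un_0_imp_zero by metis
next
  case (Suc k)
  have wM: "w \<in> M"
    using w by (simp add: Gamma_def)
  have "add (mt x u) w = add (mt y u) w"
    using Suc.prems wM by (simp add: add_mt_distrib_right)
  then have low: "mt x u = mt y u"
    using H w mt_u_in_Gamma Suc.prems unfolding cancellable_def by blast
  have shift_w: "add (jn (add v m) z) w = jn (add (add v w) m) w" if "v \<in> M" for v
    using that wM by (simp add: add_jn_distrib_right add_assoc add_commute[of m w])
  have "add (jn (add x m) z) w = add (jn (add y m) z) w"
    using Suc.prems by (simp only: shift_w)
  then have high: "jn (add x m) z = jn (add y m) z"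
    using Suc.IH Suc.prems truncation_le_un jn_upper2 by simp
  show "x = y"
    using truncation_decomp[of x] truncation_decomp[of y] low high Suc.prems by metis
qed

lemma Gamma_cancellable:
  assumes H: "\<forall>c\<in>Gamma M jn z u. cancellable (Gamma M jn z u) c"
    and w: "w \<in> Gamma M jn z u"
  shows "cancellable M w"
  unfolding cancellable_def
proof (intro ballI impI)
  fix x y assume x: "x \<in> M" and y: "y \<in> M" and e: "add x w = add y w"
  have wM: "w \<in> M"
    using w by (simp add: Gamma_def)
  obtain n where n: "le (mn n) (mt x y)"
    using strong_unit[of "mt x y"] x y by auto
  define x' y' where "x' = add x (un n)" and "y' = add y (un n)"
  have M': "x' \<in> M" "y' \<in> M"
    using x y unfolding x'_def y'_def by simp_all
  have "le (mn n) x" "le (mn n) y"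
    using n x y le_trans[of "mn n" "mt x y"] mt_lower1 mt_lower2 by simp_all
  then have nonneg: "le z x'" "le z y'"
    using x y shift_nonneg unfolding x'_def y'_def by simp_all
  obtain k where k: "le (jn x' y') (un k)"
    using strong_unit[of "jn x' y'"] M' by auto
  have bounded: "le x' (un k)" "le y' (un k)"
    using k M' le_trans[of _ "jn x' y'" "un k"] jn_upper1 jn_upper2 by simp_all
  have "add x' w = add y' w"
    using x y wM e unfolding x'_def y'_def by (metis add_assoc add_commute un_closed)
  then have "x' = y'"
    using Gamma_cancels_bounded_nonneg[OF H w] M' nonneg bounded by blast
  then show "x = y"
    using cancellable_un x y unfolding cancellable_def x'_def y'_def by blast
qed

lemma bounded_nonneg_cancellable:
  assumes H: "\<forall>c\<in>Gamma M jn z u. cancellable (Gamma M jn z u) c"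
  shows "\<lbrakk>w \<in> M; le z w; le w (un k)\<rbrakk> \<Longrightarrow> cancellable M w"
proof (induction k arbitrary: w)
  case 0
  then show ?case
    using le_un_0_imp_zero[of w] unfolding cancellable_def by simp
next
  case (Suc k)
  have "cancellable M (add (mt w u) (jn (add w m) z))"
    using Suc Gamma_cancellable[OF H] mt_u_in_Gamma truncation_le_un jn_upper2
    by (simp add: cancellable_add)
  then show ?case
    using Suc.prems truncation_decomp by simp
qed

lemma all_cancellable:
  assumes H: "\<forall>c\<in>Gamma M jn z u. cancellable (Gamma M jn z u) c"
    and w: "w \<in> M"
  shows "cancellable M w"
proof -
  obtain n where "le (mn n) w"
    using strong_unit w by blast
  then have "le z (add w (un n))"
    by (rule shift_nonneg[OF w])
  moreover obtain k where "le (add w (un n)) (un k)"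
    using strong_unit[of "add w (un n)"] w by auto
  ultimately have "cancellable M (add w (un n))"
    using bounded_nonneg_cancellable[OF H] w by simp
  then show ?thesis
    using cancellable_add_left_factor w un_closed by blast
qed

lemma eq_if_oplus_odot_eq:
  assumes "x \<in> M" "y \<in> M" "w \<in> M"
    and "oplusG add mt u x w = oplusG add mt u y w" "odotG add jn z m x w = odotG add jn z m y w"
  shows "add x w = add y w"
proof -
  have "add x w = add (mt (add x w) u) (jn (add (add x w) m) z)"
    using assms by (simp add: truncation_decomp)
  also have "\<dots> = add (mt (add y w) u) (jn (add (add y w) m) z)"
    using assms unfolding oplusG_def odotG_def by simp
  also have "\<dots> = add y w"
    using assms by (simp add: truncation_decomp)
  finally show ?thesis .
qed

end

theorem mainTheorem2:
  assumes "ucdlm M add jn mt z u m"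
  shows "((\<forall>x\<in>M. \<forall>y\<in>M. \<forall>w\<in>M. add x w = add y w \<longrightarrow> x = y)
           \<longleftrightarrow> (\<forall>x\<in>Gamma M jn z u. \<forall>y\<in>Gamma M jn z u. \<forall>w\<in>Gamma M jn z u.
                  add x w = add y w \<longrightarrow> x = y))
       \<and> ((\<forall>x\<in>Gamma M jn z u. \<forall>y\<in>Gamma M jn z u. \<forall>w\<in>Gamma M jn z u.
                  add x w = add y w \<longrightarrow> x = y)
           \<longleftrightarrow> (\<forall>x\<in>Gamma M jn z u. \<forall>y\<in>Gamma M jn z u. \<forall>w\<in>Gamma M jn z u.
                  oplusG add mt u x w = oplusG add mt u y w \<and>
                  odotG add jn z m x w = odotG add jn z m y w \<longrightarrow> x = y))"
proof -
  interpret ucdl_monoid M add jn mt z u m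
    using assms by (rule ucdl_monoid.intro)
  let ?\<Gamma> = "Gamma M jn z u"
  have \<Gamma>_sub: "?\<Gamma> \<subseteq> M"
    by (auto simp: Gamma_def)
  have "(\<forall>w\<in>M. cancellable M w) \<longleftrightarrow> (\<forall>w\<in>?\<Gamma>. cancellable ?\<Gamma> w)"
    using all_cancellable \<Gamma>_sub unfolding cancellable_def by blast
  moreover have "(\<forall>x\<in>?\<Gamma>. \<forall>y\<in>?\<Gamma>. \<forall>w\<in>?\<Gamma>. add x w = add y w \<longrightarrow> x = y)
    \<longleftrightarrow> (\<forall>x\<in>?\<Gamma>. \<forall>y\<in>?\<Gamma>. \<forall>w\<in>?\<Gamma>.
          oplusG add mt u x w = oplusG add mt u y w \<and> odotG add jn z m x w = odotG add jn z m y w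
          \<longrightarrow> x = y)"
    using eq_if_oplus_odot_eq \<Gamma>_sub unfolding oplusG_def odotG_def by (metis subsetD)
  ultimately show ?thesis
    unfolding cancellable_def by blast
qed

end
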